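(* Let $m$ and $n$ be positive integers such that $1<m\le n$. Then \[ \sum_{d=1}^n \mu(d)\, 2^{\lfloor\frac{n}{d} \rfloor - \lfloor \frac{n-1}{d} \rfloor + \lfloor\frac{m}{d} \rfloor - \lfloor \frac{m-1}{d} \rfloor} = \begin{cases} M(n) & \text{if } \gcd(m,n) >1, \\ 1 + M(n) & \text{if } \gcd(m,n)=1. \end{cases} \]
   Context: $\mu$ is the Möbius function and $M(n)=\sum_{d=1}^n\mu(d)$ is the Mertens function. $\lfloor x\rfloor$ is the floor of $x$. *)

theory Defs
  imports Main "HOL-Computational_Algebra.Squarefree" "HOL-Computational_Algebra.Primes"
begin

definition moebius_mu :: "nat \<Rightarrow> int" where
  "moebius_mu n = (if n = 0 \<or> \<not> squarefree n then 0 else (-1) ^ card (prime_factors n))"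

definition mertens :: "nat \<Rightarrow> int" where
  "mertens n = (\<Sum>d=1..n. moebius_mu d)"

end

theory Submission
  imports Defs
begin

text \<open>Since \<open>\<lfloor>k/d\<rfloor> - \<lfloor>(k-1)/d\<rfloor> = [d | k]\<close>, the summand is
  \<open>\<mu>(d) 2^([d|n] + [d|m]) = \<mu>(d) (1 + [d|n] + [d|m] + [d | gcd m n])\<close>. Summed over
  \<open>d \<le> n\<close>, each of the last three terms is a divisor sum \<open>\<Sum>_{d|k} \<mu>(d) = [k = 1]\<close>;
  these vanish for \<open>k = n, m > 1\<close> and leave \<open>M(n) + [gcd m n = 1]\<close>.\<close>

lemma moebius_mu_prime_times:
  fixes p e :: nat
  assumes "prime p" and "\<not> p dvd e" and "e > 0"
  shows "moebius_mu (p * e) = - moebius_mu e"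
proof -
  have "coprime p e" using assms by (simp add: prime_imp_coprime)
  then have "squarefree (p * e) \<longleftrightarrow> squarefree e"
    using squarefree_mult_coprime squarefree_prime[OF \<open>prime p\<close>] squarefree_multD(2) by blast
  moreover have "prime_factors (p * e) = insert p (prime_factors e)"
    using prime_factors_product[of p e] assms by (auto simp: prime_prime_factors)
  moreover have "p \<notin> prime_factors e" using assms by auto
  ultimately show ?thesis using assms unfolding moebius_mu_def by auto
qed

text \<open>For a prime \<open>p | k\<close>, the divisors not divisible by \<open>p\<close> cancel against their
  multiples by \<open>p\<close>, and divisors divisible by \<open>p\<^sup>2\<close> contribute nothing.\<close>

lemma sum_moebius_mu_divisors:
  fixes k :: nat
  assumes "k > 0"
  shows "(\<Sum>d | d dvd k. moebius_mu d) = of_bool (k = 1)"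
proof (cases "k = 1")
  case True
  then show ?thesis by (simp add: moebius_mu_def)
next
  case False
  then obtain p where p: "prime p" "p dvd k" using prime_factor_nat by blast
  define S where "S = {d. d dvd k}"
  define A where "A = {d\<in>S. \<not> p dvd d}"
  define B where "B = {d\<in>S. p dvd d \<and> \<not> p\<^sup>2 dvd d}"
  define C where "C = {d\<in>S. p\<^sup>2 dvd d}"
  have fin: "finite A" "finite B" "finite C"
    using assms unfolding A_def B_def C_def S_def by auto
  have "S = A \<union> B \<union> C" unfolding A_def B_def C_def by auto
  moreover have "A \<inter> B = {}" "(A \<union> B) \<inter> C = {}"
    unfolding A_def B_def C_def by (auto simp: power2_eq_square)
  ultimately have sum_S: "sum moebius_mu S = sum moebius_mu A + sum moebius_mu B + sum moebius_mu C"
    using fin by (simp add: sum.union_disjoint)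
  have sum_C: "sum moebius_mu C = 0"
  proof (intro sum.neutral ballI)
    fix d assume "d \<in> C"
    then have "\<not> squarefree d"
      using p not_squarefreeI[of p d] prime_gt_1_nat[of p] unfolding C_def by auto
    then show "moebius_mu d = 0" unfolding moebius_mu_def by simp
  qed
  have B_eq: "B = (*) p ` A"
  proof (intro set_eqI iffI)
    fix d assume d: "d \<in> B"
    then obtain e where "d = p * e" unfolding B_def by auto
    with d show "d \<in> (*) p ` A" unfolding A_def B_def S_def by (auto simp: power2_eq_square)
  next
    fix d assume "d \<in> (*) p ` A"
    then obtain e where d: "d = p * e" and e: "e dvd k" "\<not> p dvd e" unfolding A_def S_def by auto
    then have "p * e dvd k" using p divides_mult prime_imp_coprime by blast
    moreover have "\<not> p\<^sup>2 dvd p * e" using e p by (auto simp: power2_eq_square)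
    ultimately show "d \<in> B" unfolding B_def S_def d by auto
  qed
  have "sum moebius_mu B = (\<Sum>e\<in>A. moebius_mu (p * e))"
    unfolding B_eq using p by (subst sum.reindex) (auto simp: inj_on_def prime_gt_0_nat)
  also have "\<dots> = - sum moebius_mu A"
    using assms p moebius_mu_prime_times
    by (auto simp: A_def S_def sum_negf[symmetric] intro!: sum.cong intro: Nat.gr0I)
  finally show ?thesis using sum_S sum_C False unfolding S_def by simp
qed

lemma sum_moebius_mu_dvd_atLeastAtMost:
  fixes k n :: nat
  assumes "0 < k" "k \<le> n"
  shows "(\<Sum>d=1..n. of_bool (d dvd k) * moebius_mu d) = of_bool (k = 1)"
proof -
  have "{1..n} \<inter> {d. d dvd k} = {d. d dvd k}"
    using assms by (auto intro: dvd_pos_nat[THEN Suc_leI] dvd_imp_le[THEN order_trans])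
  then have "(\<Sum>d=1..n. of_bool (d dvd k) * moebius_mu d) = (\<Sum>d | d dvd k. moebius_mu d)"
    by (simp add: sum.inter_filter)
  then show ?thesis using sum_moebius_mu_divisors assms by simp
qed

lemma div_minus_pred_div:
  fixes k d :: nat
  assumes "k > 0"
  shows "k div d - (k - 1) div d = of_bool (d dvd k)"
proof -
  obtain j where "k = Suc j" using assms by (cases k) auto
  then show ?thesis using div_Suc[of j d] by (auto simp: dvd_eq_mod_eq_0)
qed

lemma two_power_of_bool_add:
  "(2::int) ^ (of_bool P + of_bool Q) = 1 + of_bool P + of_bool Q + of_bool (P \<and> Q)"
  by (cases P; cases Q) simp_all

theorem theorem4p1:
  fixes m n :: nat
  assumes "1 < m" and "m \<le> n"
  shows "(\<Sum>d=1..n. moebius_mu d * 2 ^ (n div d - (n - 1) div d + (m div d - (m - 1) div d)))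
         = (if gcd m n > 1 then mertens n else 1 + mertens n)"
proof -
  let ?g = "gcd m n"
  have "0 < m" "0 < n" "0 < ?g" "?g \<le> n" using assms by (simp_all add: gcd_le2_nat)
  have summand: "moebius_mu d * 2 ^ (n div d - (n - 1) div d + (m div d - (m - 1) div d))
      = moebius_mu d + of_bool (d dvd n) * moebius_mu d + of_bool (d dvd m) * moebius_mu d
        + of_bool (d dvd ?g) * moebius_mu d" for d
    unfolding div_minus_pred_div[OF \<open>0 < n\<close>] div_minus_pred_div[OF \<open>0 < m\<close>]
      two_power_of_bool_add by (simp add: algebra_simps conj_commute)
  have "(\<Sum>d=1..n. moebius_mu d * 2 ^ (n div d - (n - 1) div d + (m div d - (m - 1) div d)))
      = mertens n + (\<Sum>d=1..n. of_bool (d dvd n) * moebius_mu d)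
        + (\<Sum>d=1..n. of_bool (d dvd m) * moebius_mu d)
        + (\<Sum>d=1..n. of_bool (d dvd ?g) * moebius_mu d)" (is "?S = _")
    unfolding summand mertens_def by (simp add: sum.distrib)
  also have "\<dots> = mertens n + of_bool (?g = 1)"
    using \<open>0 < m\<close> \<open>0 < ?g\<close> assms \<open>?g \<le> n\<close>
    by (simp only: sum_moebius_mu_dvd_atLeastAtMost) simp
  finally have "?S = mertens n + of_bool (?g = 1)" .
  moreover have "1 < ?g \<longleftrightarrow> ?g \<noteq> 1" using \<open>0 < ?g\<close> by linarith
  ultimately show ?thesis by (simp add: mertens_def)
qed

end
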